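(* Let $c>0$, $k>1$, $\eta\in(0,\tfrac12)$, $Q\ge 0$. Consider the $2\times1$ merge network with upstream capacities $c_1=c$, $c_2=kc$, inflows $f_1=\eta c$, $f_2=k\eta c$, downstream capacity $c_0=(k+1)c$ and constant downstream queue length $Q$, with weights $\gamma_0,\gamma_1,\gamma_2>0$. For an ordered pair $(u,s)\in\{(1,2),(2,1)\}$ set $$q_{s,act}=\frac{\gamma_0}{\gamma_s}Q+\frac{\gamma_u f_u-\gamma_0 Q}{\gamma_s c_s}\,c_u,$$ and say that the R1 state $(u,s)$ can exist if $q_{s,act}\ge c_s$. Then, in regime R1: (a) the state $(u,s)=(1,2)$ can exist when: for $\gamma_0=\gamma_1=\gamma_2=1$, $Q\ge \frac{k^2-\eta}{k-1}c$; for $\gamma_i=1/c_i$ ($i=0,1,2$), $Q\ge \frac{k-\eta}{k-1}(k+1)c$; (b) the state $(u,s)=(2,1)$ can exist when: for $\gamma_0=\gamma_1=\gamma_2=1$, $Q\le \frac{k^2\eta-1}{k-1}c$; for $\gamma_i=1/c_i$ ($i=0,1,2$), $Q\le \frac{k\eta-1}{k-1}(k+1)c$.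
   Context: Model: two upstream queues merging into a downstream queue of constant length $Q$; the generalized backpressure priority of upstream queue $i$ is $p_i=(\gamma_i q_i-\gamma_0 Q)c_i$, and each upstream queue length is at least its inflow $f_i$, so its minimal priority is $p_i(f_i)$. The activation priority $p_{act}=\max_j p_j(f_j)$ is the minimal priority a queue needs to be activated, and $q_{i,act}=\frac{\gamma_0}{\gamma_i}Q+\frac{p_{act}}{\gamma_i c_i}$ is the corresponding queue length. Regime R1: one upstream queue, $u$, is unsaturated (outflow below capacity) and the other, $s$, is saturated (outflow equal to capacity $c_s$ when activated). In R1, $p_{act}=p_u(f_u)$, and queue $s$ being saturated corresponds to $q_{s,act}\ge c_s$. The weights $\gamma\equiv1$ give classical backpressure; $\gamma_i=1/c_i$ (including $\gamma_0=1/c_0$ for the downstream queue) give the re-scaled variant. *)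

theory Defs
  imports Complex_Main
begin

text \<open>2x1 merge network: index 0 is the downstream queue, 1 and 2 the upstream queues.
  Capacities c_1 = c, c_2 = k c, c_0 = (k+1) c; inflows f_1 = eta c, f_2 = k eta c.\<close>

definition cap :: "real \<Rightarrow> real \<Rightarrow> nat \<Rightarrow> real" where
  "cap c k i = (if i = 0 then (k + 1) * c else if i = 1 then c else k * c)"

definition inflow :: "real \<Rightarrow> real \<Rightarrow> real \<Rightarrow> nat \<Rightarrow> real" where
  "inflow c k \<eta> i = (if i = 1 then \<eta> * c else k * \<eta> * c)"

definition q_s_act :: "(nat \<Rightarrow> real) \<Rightarrow> real \<Rightarrow> real \<Rightarrow> real \<Rightarrow> real \<Rightarrow> nat \<Rightarrow> nat \<Rightarrow> real" where
  "q_s_act \<gamma> c k \<eta> Q u s =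
     \<gamma> 0 / \<gamma> s * Q + (\<gamma> u * inflow c k \<eta> u - \<gamma> 0 * Q) / (\<gamma> s * cap c k s) * cap c k u"

definition R1_can_exist :: "(nat \<Rightarrow> real) \<Rightarrow> real \<Rightarrow> real \<Rightarrow> real \<Rightarrow> real \<Rightarrow> nat \<Rightarrow> nat \<Rightarrow> bool" where
  "R1_can_exist \<gamma> c k \<eta> Q u s \<longleftrightarrow> q_s_act \<gamma> c k \<eta> Q u s \<ge> cap c k s"

definition gamma_classic :: "nat \<Rightarrow> real" where
  "gamma_classic = (\<lambda>_. 1)"

definition gamma_rescaled :: "real \<Rightarrow> real \<Rightarrow> nat \<Rightarrow> real" where
  "gamma_rescaled c k = (\<lambda>i. 1 / cap c k i)"

end

theory Submission
  imports Defs
begin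

text \<open>In each of the four cases the activation queue length of the saturated queue is an affine
  function of Q whose slope has the sign of k - 1 for the state (1,2) and of 1 - k for the
  state (2,1). Comparing it with the capacity of the saturated queue and solving for Q yields the
  thresholds.\<close>

lemma q_s_act_classic_1_2:
  fixes c k \<eta> Q :: real
  assumes "c \<noteq> 0" and "k \<noteq> 0"
  shows "q_s_act gamma_classic c k \<eta> Q 1 2 = Q + (\<eta> * c - Q) / k"
  using assms by (simp add: q_s_act_def gamma_classic_def cap_def inflow_def field_simps)

lemma q_s_act_classic_2_1:
  fixes c k \<eta> Q :: real
  assumes "c \<noteq> 0"
  shows "q_s_act gamma_classic c k \<eta> Q 2 1 = (1 - k) * Q + k\<^sup>2 * \<eta> * c"
  using assms
  by (simp add: q_s_act_def gamma_classic_def cap_def inflow_def field_simps power2_eq_square)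

lemma q_s_act_rescaled_1_2:
  fixes c k \<eta> Q :: real
  assumes "c \<noteq> 0" and "k \<noteq> 0" and "k + 1 \<noteq> 0"
  shows "q_s_act (gamma_rescaled c k) c k \<eta> Q 1 2 = (k - 1) * Q / (k + 1) + \<eta> * c"
proof -
  have "(k + 1) * c \<noteq> 0" using assms by simp
  with assms show ?thesis
    by (simp add: q_s_act_def gamma_rescaled_def cap_def inflow_def divide_simps)
      (simp add: algebra_simps)
qed

lemma q_s_act_rescaled_2_1:
  fixes c k \<eta> Q :: real
  assumes "c \<noteq> 0" and "k \<noteq> 0" and "k + 1 \<noteq> 0"
  shows "q_s_act (gamma_rescaled c k) c k \<eta> Q 2 1 = (1 - k) * Q / (k + 1) + k * \<eta> * c"
proof -
  have "(k + 1) * c \<noteq> 0" using assms by simp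
  with assms show ?thesis
    by (simp add: q_s_act_def gamma_rescaled_def cap_def inflow_def divide_simps)
      (simp add: algebra_simps)
qed

lemma R1_can_exist_classic_1_2_iff:
  fixes c k \<eta> Q :: real
  assumes "c \<noteq> 0" and "k > 1"
  shows "R1_can_exist gamma_classic c k \<eta> Q 1 2 \<longleftrightarrow> Q \<ge> (k\<^sup>2 - \<eta>) / (k - 1) * c"
proof -
  have activation: "q_s_act gamma_classic c k \<eta> Q 1 2 = Q + (\<eta> * c - Q) / k"
    by (rule q_s_act_classic_1_2) (use assms in simp_all)
  have "k > 0" and "k - 1 > 0" using assms(2) by simp_all
  then show ?thesis
    unfolding R1_can_exist_def activation by (simp add: cap_def field_simps power2_eq_square)
qed

lemma R1_can_exist_rescaled_1_2_iff:
  fixes c k \<eta> Q :: real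
  assumes "c \<noteq> 0" and "k > 1"
  shows "R1_can_exist (gamma_rescaled c k) c k \<eta> Q 1 2 \<longleftrightarrow>
    Q \<ge> (k - \<eta>) / (k - 1) * (k + 1) * c"
proof -
  have activation: "q_s_act (gamma_rescaled c k) c k \<eta> Q 1 2 =
      (k - 1) * Q / (k + 1) + \<eta> * c"
    by (rule q_s_act_rescaled_1_2) (use assms in simp_all)
  have "k + 1 > 0" and "k - 1 > 0" using assms(2) by simp_all
  then show ?thesis
    unfolding R1_can_exist_def activation by (simp add: cap_def field_simps)
qed

lemma R1_can_exist_classic_2_1_iff:
  fixes c k \<eta> Q :: real
  assumes "c \<noteq> 0" and "k > 1"
  shows "R1_can_exist gamma_classic c k \<eta> Q 2 1 \<longleftrightarrow> Q \<le> (k\<^sup>2 * \<eta> - 1) / (k - 1) * c"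
proof -
  have activation: "q_s_act gamma_classic c k \<eta> Q 2 1 = (1 - k) * Q + k\<^sup>2 * \<eta> * c"
    by (rule q_s_act_classic_2_1) (use assms in simp_all)
  have "k - 1 > 0" using assms(2) by simp
  then show ?thesis
    unfolding R1_can_exist_def activation by (simp add: cap_def field_simps)
qed

lemma R1_can_exist_rescaled_2_1_iff:
  fixes c k \<eta> Q :: real
  assumes "c \<noteq> 0" and "k > 1"
  shows "R1_can_exist (gamma_rescaled c k) c k \<eta> Q 2 1 \<longleftrightarrow>
    Q \<le> (k * \<eta> - 1) / (k - 1) * (k + 1) * c"
proof -
  have activation: "q_s_act (gamma_rescaled c k) c k \<eta> Q 2 1 =
      (1 - k) * Q / (k + 1) + k * \<eta> * c"
    by (rule q_s_act_rescaled_2_1) (use assms in simp_all)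
  have "k + 1 > 0" and "k - 1 > 0" using assms(2) by simp_all
  then show ?thesis
    unfolding R1_can_exist_def activation by (simp add: cap_def field_simps)
qed

theorem proposition3:
  fixes c k \<eta> Q :: real
  assumes "c > 0" and "k > 1" and "0 < \<eta>" and "\<eta> < 1/2" and "Q \<ge> 0"
  shows "(R1_can_exist gamma_classic c k \<eta> Q 1 2 \<longleftrightarrow> Q \<ge> (k^2 - \<eta>) / (k - 1) * c)
       \<and> (R1_can_exist (gamma_rescaled c k) c k \<eta> Q 1 2 \<longleftrightarrow> Q \<ge> (k - \<eta>) / (k - 1) * (k + 1) * c)
       \<and> (R1_can_exist gamma_classic c k \<eta> Q 2 1 \<longleftrightarrow> Q \<le> (k^2 * \<eta> - 1) / (k - 1) * c)
       \<and> (R1_can_exist (gamma_rescaled c k) c k \<eta> Q 2 1 \<longleftrightarrow> Q \<le> (k * \<eta> - 1) / (k - 1) * (k + 1) * c)"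
proof -
  have "c \<noteq> 0" using assms(1) by simp
  with assms(2) show ?thesis
    using R1_can_exist_classic_1_2_iff R1_can_exist_rescaled_1_2_iff
      R1_can_exist_classic_2_1_iff R1_can_exist_rescaled_2_1_iff
    by blast
qed

end
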